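(* Let $\mu_{T}$ be the Möbius function of the poset $T_d$ of types of degree $d$. If $\tau\in T_d$ is ramified, then $\mu_T(\tau,(d^1))=0$.
   Context: A type of degree $d$ is a finite multiset of pairs $(b,m)$ of positive integers with $\sum bm=d$. $T_d$ is the set of types of degree $d$ with the partial order generated by elementary merges (replace two pairs $(d_1,m),(d_2,m)$ with equal second entry by $(d_1+d_2,m)$) and elementary forgets (replace a pair $(d_1,m_1)$ by $(d_1,m_1-a),(d_1,a)$ with $0<a<m_1$): $\tau\le\lambda$ iff $\lambda$ is obtained from $\tau$ by a finite sequence of such operations. Its unique maximal element is $(d^1)=\{(d,1)\}$. A type is unramified if all second entries equal $1$, and ramified otherwise. The Möbius function $\mu_T$ is defined by $\sum_{\tau\le\kappa\le\lambda}\mu_T(\kappa,\lambda)=\delta_{\tau,\lambda}$ for $\tau\le\lambda$. *)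

theory Defs
  imports Main "HOL-Library.Multiset"
begin

type_synonym typ_ms = "(nat \<times> nat) multiset"

definition is_type :: "nat \<Rightarrow> typ_ms \<Rightarrow> bool" where
  "is_type d t \<longleftrightarrow> (\<forall>p \<in># t. 0 < fst p \<and> 0 < snd p) \<and> (\<Sum>p\<in>#t. fst p * snd p) = d"

definition types :: "nat \<Rightarrow> typ_ms set" where
  "types d = {t. is_type d t}"

definition elem_merge :: "typ_ms \<Rightarrow> typ_ms \<Rightarrow> bool" where
  "elem_merge t l \<longleftrightarrow> (\<exists>A d1 d2 m. t = A + {#(d1, m), (d2, m)#} \<and> l = A + {#(d1 + d2, m)#})"

definition elem_forget :: "typ_ms \<Rightarrow> typ_ms \<Rightarrow> bool" where
  "elem_forget t l \<longleftrightarrow> (\<exists>A d1 m1 a. 0 < a \<and> a < m1 \<and>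
      t = A + {#(d1, m1)#} \<and> l = A + {#(d1, m1 - a), (d1, a)#})"

definition elem_step :: "typ_ms \<Rightarrow> typ_ms \<Rightarrow> bool" where
  "elem_step t l \<longleftrightarrow> elem_merge t l \<or> elem_forget t l"

definition type_le :: "nat \<Rightarrow> typ_ms \<Rightarrow> typ_ms \<Rightarrow> bool" where
  "type_le d t l \<longleftrightarrow> t \<in> types d \<and> l \<in> types d \<and> elem_step\<^sup>*\<^sup>* t l"

definition top_type :: "nat \<Rightarrow> typ_ms" where
  "top_type d = {#(d, 1)#}"

definition unramified :: "typ_ms \<Rightarrow> bool" where
  "unramified t \<longleftrightarrow> (\<forall>p \<in># t. snd p = 1)"

definition ramified :: "typ_ms \<Rightarrow> bool" where
  "ramified t \<longleftrightarrow> \<not> unramified t"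

definition mobius_T :: "nat \<Rightarrow> typ_ms \<Rightarrow> typ_ms \<Rightarrow> int" where
  "mobius_T d = (THE f. (\<forall>t l. type_le d t l \<longrightarrow>
        (\<Sum>k\<in>{k. type_le d t k \<and> type_le d k l}. f k l) = (if t = l then 1 else 0))
     \<and> (\<forall>t l. \<not> type_le d t l \<longrightarrow> f t l = 0))"

end

theory Submission
  imports Defs
begin

text \<open>
  Every elementary operation strictly decreases \<open>\<Sum> m\<^sup>2\<close>, so \<open>T\<^sub>d\<close> is a finite poset and
  \<open>\<mu>(\<tau>, (d\<^sup>1))\<close> can be computed by the recursion \<open>\<mu>(\<tau>, \<lambda>) = - \<Sum>\<^bsub>\<tau> < \<kappa> \<le> \<lambda>\<^esub> \<mu>(\<kappa>, \<lambda>)\<close>.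
  Forgetting all multiplicities of \<open>\<tau>\<close> gives an unramified type \<open>\<tau>\<^sup>u \<ge> \<tau>\<close>, and
  an unramified type lies above \<open>\<tau>\<close> iff it lies above \<open>\<tau>\<^sup>u\<close>. By induction on the
  weight, ramified \<open>\<kappa>\<close> contribute nothing to the recursion, so \<open>\<mu>(\<tau>, (d\<^sup>1))\<close> equals
  minus the sum of \<open>\<mu>(\<kappa>, (d\<^sup>1))\<close> over the whole interval \<open>[\<tau>\<^sup>u, (d\<^sup>1)]\<close>, which vanishes
  because a ramified \<open>\<tau>\<close> has \<open>\<tau>\<^sup>u \<noteq> (d\<^sup>1)\<close>.
\<close>

section \<open>The order on types\<close>

definition multiplicity_weight :: "typ_ms \<Rightarrow> nat" where
  "multiplicity_weight t = (\<Sum>p\<in>#t. snd p * snd p)"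

lemma elem_step_types: "elem_step t l \<Longrightarrow> t \<in> types d \<Longrightarrow> l \<in> types d"
  unfolding elem_step_def elem_merge_def elem_forget_def types_def is_type_def
  by (fastforce simp: add_mult_distrib diff_mult_distrib2)

lemma elem_step_weight_less:
  assumes step: "elem_step t l" and pos: "\<forall>p\<in>#t. 0 < snd p"
  shows "multiplicity_weight l < multiplicity_weight t"
  using step unfolding elem_step_def
proof
  assume "elem_merge t l"
  then obtain A d1 d2 m where "t = A + {#(d1, m), (d2, m)#}" "l = A + {#(d1 + d2, m)#}"
    unfolding elem_merge_def by blast
  with pos show ?thesis by (simp add: multiplicity_weight_def)
next
  assume "elem_forget t l"
  then obtain A d1 m1 a where "0 < a" "a < m1"
    and "t = A + {#(d1, m1)#}" "l = A + {#(d1, m1 - a), (d1, a)#}"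
    unfolding elem_forget_def by blast
  moreover have "(m1 - a) * (m1 - a) + a * a < m1 * m1"
  proof -
    obtain b where "m1 = b + a" "0 < b"
      using \<open>a < m1\<close> less_imp_add_positive by (metis add.commute)
    with \<open>0 < a\<close> show ?thesis by (simp add: algebra_simps)
  qed
  ultimately show ?thesis by (simp add: multiplicity_weight_def)
qed

lemma elem_steps_types: "elem_step\<^sup>*\<^sup>* t l \<Longrightarrow> t \<in> types d \<Longrightarrow> l \<in> types d"
  by (induction rule: rtranclp_induct) (auto intro: elem_step_types)

lemma elem_steps_weight_less:
  "elem_step\<^sup>*\<^sup>* t l \<Longrightarrow> t \<in> types d \<Longrightarrow> l \<noteq> t \<Longrightarrow> multiplicity_weight l < multiplicity_weight t"
proof (induction rule: rtranclp_induct)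
  case (step y z)
  have "multiplicity_weight z < multiplicity_weight y"
    using step elem_steps_types[of t y d]
    by (intro elem_step_weight_less) (auto simp: types_def is_type_def)
  with step show ?case by fastforce
qed simp

lemma type_le_weight_less:
  "type_le d t k \<Longrightarrow> k \<noteq> t \<Longrightarrow> multiplicity_weight k < multiplicity_weight t"
  unfolding type_le_def using elem_steps_weight_less by blast

lemma type_le_trans: "type_le d t k \<Longrightarrow> type_le d k l \<Longrightarrow> type_le d t l"
  unfolding type_le_def by auto

lemma type_le_antisym: "type_le d t k \<Longrightarrow> type_le d k t \<Longrightarrow> k = t"
  using type_le_weight_less by (metis less_asym)

lemma elem_step_add_right:
  assumes "elem_step t l"
  shows "elem_step (t + C) (l + C)"
  using assms[unfolded elem_step_def]
proof (elim disjE)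
  assume "elem_merge t l"
  then obtain A d1 d2 m where "t = A + {#(d1, m), (d2, m)#}" "l = A + {#(d1 + d2, m)#}"
    unfolding elem_merge_def by blast
  then have "t + C = (A + C) + {#(d1, m), (d2, m)#}" "l + C = (A + C) + {#(d1 + d2, m)#}"
    by (simp_all add: ac_simps)
  then show ?thesis unfolding elem_step_def elem_merge_def by blast
next
  assume "elem_forget t l"
  then obtain A d1 m1 a where "0 < a" "a < m1"
    and "t = A + {#(d1, m1)#}" "l = A + {#(d1, m1 - a), (d1, a)#}"
    unfolding elem_forget_def by blast
  moreover from this have "t + C = (A + C) + {#(d1, m1)#}"
    "l + C = (A + C) + {#(d1, m1 - a), (d1, a)#}"
    by (simp_all add: ac_simps)
  ultimately show ?thesis unfolding elem_step_def elem_forget_def by blast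
qed

lemma elem_steps_add:
  assumes "elem_step\<^sup>*\<^sup>* s s'" "elem_step\<^sup>*\<^sup>* t t'"
  shows "elem_step\<^sup>*\<^sup>* (s + t) (s' + t')"
proof -
  have add_right: "elem_step\<^sup>*\<^sup>* u v \<Longrightarrow> elem_step\<^sup>*\<^sup>* (u + C) (v + C)" for u v C
    by (induction rule: rtranclp_induct) (auto intro: rtranclp.rtrancl_into_rtrancl elem_step_add_right)
  have "elem_step\<^sup>*\<^sup>* (s' + t) (s' + t')"
    using add_right[OF assms(2), of s'] by (simp only: add.commute)
  with add_right[OF assms(1), of t] show ?thesis by (rule rtranclp_trans)
qed

lemma finite_types: "finite (types d)"
proof (rule finite_subset)
  show "types d \<subseteq> (\<Union>n\<le>d. multisets_of_size ({1..d} \<times> {1..d}) n)"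
  proof
    fix t assume "t \<in> types d"
    then have pos: "\<forall>p\<in>#t. 0 < fst p \<and> 0 < snd p" and deg: "(\<Sum>p\<in>#t. fst p * snd p) = d"
      by (auto simp: types_def is_type_def)
    have "p \<in> {1..d} \<times> {1..d}" if "p \<in># t" for p
    proof -
      have prod_le: "fst p * snd p \<le> d" using deg multi_member_split[OF that] by force
      have "0 < fst p" "0 < snd p" using pos that by auto
      moreover have "fst p \<le> d" "snd p \<le> d"
        using calculation by (simp_all add: le_trans[OF _ prod_le])
      ultimately show ?thesis by (simp add: mem_Times_iff)
    qed
    then have "set_mset t \<subseteq> {1..d} \<times> {1..d}" by blast
    moreover have "size t \<le> d"
    proof -
      have "size t = (\<Sum>p\<in>#t. 1)" by (rule size_eq_sum_mset)
      also have "\<dots> \<le> (\<Sum>p\<in>#t. fst p * snd p)"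
        using pos by (intro sum_mset_mono) (simp add: Suc_le_eq)
      finally show ?thesis using deg by simp
    qed
    ultimately show "t \<in> (\<Union>n\<le>d. multisets_of_size ({1..d} \<times> {1..d}) n)"
      by (auto simp: multisets_of_size_def)
  qed
qed auto

section \<open>The Moebius function\<close>

definition type_interval :: "nat \<Rightarrow> typ_ms \<Rightarrow> typ_ms \<Rightarrow> typ_ms set" where
  "type_interval d t l = {k. type_le d t k \<and> type_le d k l}"

lemma finite_type_interval: "finite (type_interval d t l)"
  by (rule finite_subset[OF _ finite_types[of d]]) (auto simp: type_interval_def type_le_def)

lemma sum_type_interval_remove:
  assumes "type_le d t l"
  shows "(\<Sum>k\<in>type_interval d t l. g k) = g t + (\<Sum>k\<in>type_interval d t l - {t}. g k)"
proof -
  have "t \<in> type_interval d t l"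
    using assms by (auto simp: type_interval_def type_le_def)
  then show ?thesis by (simp add: finite_type_interval sum.remove)
qed

function mobius_rec :: "nat \<Rightarrow> typ_ms \<Rightarrow> typ_ms \<Rightarrow> int" where
  "mobius_rec d t l =
     (if \<not> type_le d t l then 0 else if t = l then 1
      else - (\<Sum>k\<in>type_interval d t l - {t}. mobius_rec d k l))"
  by auto
termination
  by (relation "measure (\<lambda>(d, t, l). multiplicity_weight t)")
     (auto simp: type_interval_def intro: type_le_weight_less)

declare mobius_rec.simps [simp del]

lemma mobius_rec_not_le: "\<not> type_le d t l \<Longrightarrow> mobius_rec d t l = 0"
  by (subst mobius_rec.simps) simp

lemma mobius_rec_recurrence:
  assumes "t \<noteq> l"
  shows "mobius_rec d t l = - (\<Sum>k\<in>type_interval d t l - {t}. mobius_rec d k l)"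
proof (cases "type_le d t l")
  case False
  then have "type_interval d t l = {}"
    by (auto simp: type_interval_def intro: type_le_trans)
  with False show ?thesis by (simp add: mobius_rec_not_le)
qed (use assms in \<open>subst mobius_rec.simps, simp\<close>)

lemma sum_mobius_rec:
  assumes "type_le d t l"
  shows "(\<Sum>k\<in>type_interval d t l. mobius_rec d k l) = (if t = l then 1 else 0)"
proof (cases "t = l")
  case True
  with assms have "type_interval d t l = {t}"
    by (auto simp: type_interval_def dest: type_le_antisym)
  with True assms show ?thesis by (subst mobius_rec.simps) simp
next
  case False
  with mobius_rec_recurrence[OF False] show ?thesis
    unfolding sum_type_interval_remove[OF assms] by simp
qed

lemma mobius_T_eq_mobius_rec: "mobius_T d = mobius_rec d"
  unfolding mobius_T_def type_interval_def[symmetric]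
proof (rule the_equality)
  fix f :: "typ_ms \<Rightarrow> typ_ms \<Rightarrow> int"
  assume f: "(\<forall>t l. type_le d t l \<longrightarrow>
        (\<Sum>k\<in>type_interval d t l. f k l) = (if t = l then 1 else 0))
     \<and> (\<forall>t l. \<not> type_le d t l \<longrightarrow> f t l = 0)"
  have "f t l = mobius_rec d t l" for t l
  proof (induction "multiplicity_weight t" arbitrary: t rule: less_induct)
    case less
    show ?case
    proof (cases "type_le d t l")
      case True
      have "(\<Sum>k\<in>type_interval d t l - {t}. f k l) =
            (\<Sum>k\<in>type_interval d t l - {t}. mobius_rec d k l)"
        by (rule sum.cong) (auto simp: type_interval_def intro!: less type_le_weight_less)
      moreover have "f t l + (\<Sum>k\<in>type_interval d t l - {t}. f k l) = (if t = l then 1 else 0)"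
        using f[THEN conjunct1, rule_format, OF True] by (simp add: sum_type_interval_remove[OF True])
      ultimately show ?thesis
        using sum_mobius_rec[OF True] by (simp add: sum_type_interval_remove[OF True])
    qed (use f mobius_rec_not_le in simp)
  qed
  then show "f = mobius_rec d" by blast
qed (use sum_mobius_rec mobius_rec_not_le in auto)

lemma sum_mobius_rec_eq_0:
  assumes "s \<noteq> l"
  shows "(\<Sum>k\<in>type_interval d s l. mobius_rec d k l) = 0"
proof (cases "type_le d s l")
  case False
  then have "type_interval d s l = {}"
    by (auto simp: type_interval_def intro: type_le_trans)
  then show ?thesis by simp
qed (use assms sum_mobius_rec in simp)

section \<open>Forgetting multiplicities\<close>

definition unramify :: "typ_ms \<Rightarrow> typ_ms" where
  "unramify t = (\<Sum>p\<in>#t. replicate_mset (snd p) (fst p, 1))"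

lemma unramify_simps [simp]:
  "unramify {#} = {#}"
  "unramify (add_mset p t) = replicate_mset (snd p) (fst p, 1) + unramify t"
  "unramify (s + t) = unramify s + unramify t"
  by (simp_all add: unramify_def)

lemma unramified_unramify: "unramified (unramify t)"
  by (induction t) (auto simp: unramified_def)

lemma unramify_unramified: "unramified t \<Longrightarrow> unramify t = t"
  by (induction t) (auto simp: unramified_def)

lemma unramify_types:
  assumes "t \<in> types d"
  shows "unramify t \<in> types d"
proof -
  have "(\<Sum>p\<in>#unramify t. fst p * snd p) = (\<Sum>p\<in>#t. fst p * snd p)"
    by (induction t) (simp_all add: mult.commute)
  moreover have "\<forall>p\<in>#t. 0 < fst p \<and> 0 < snd p \<Longrightarrow> \<forall>p\<in>#unramify t. 0 < fst p \<and> 0 < snd p"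
    by (induction t) auto
  ultimately show ?thesis
    using assms by (simp add: types_def is_type_def)
qed

lemma unramify_ne_top:
  assumes "t \<in> types d" "ramified t"
  shows "unramify t \<noteq> top_type d"
proof -
  obtain p where p: "p \<in># t" "snd p \<noteq> 1" "0 < snd p"
    using assms by (auto simp: ramified_def unramified_def types_def is_type_def)
  then obtain A where "t = add_mset p A" by (blast dest: multi_member_split)
  with p have "2 \<le> size (unramify t)" by simp
  then show ?thesis by (auto simp: top_type_def)
qed

lemma elem_steps_replicate: "0 < m \<Longrightarrow> elem_step\<^sup>*\<^sup>* {#(b, m)#} (replicate_mset m (b, 1))"
proof (induction m)
  case (Suc n)
  show ?case
  proof (cases "n = 0")
    case False
    have "elem_forget ({#} + {#(b, Suc n)#}) ({#} + {#(b, Suc n - 1), (b, 1)#})"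
      unfolding elem_forget_def using False
      by (intro exI[of _ "{#}"] exI[of _ b] exI[of _ "Suc n"] exI[of _ 1]) simp
    then have "elem_step {#(b, Suc n)#} ({#(b, n)#} + {#(b, 1)#})"
      by (simp add: elem_step_def add_mset_commute)
    moreover have "elem_step\<^sup>*\<^sup>* ({#(b, n)#} + {#(b, 1)#}) (replicate_mset n (b, 1) + {#(b, 1)#})"
      using Suc False by (intro elem_steps_add) auto
    ultimately show ?thesis by (simp add: converse_rtranclp_into_rtranclp)
  qed simp
qed simp

lemma elem_steps_unramify: "\<forall>p\<in>#t. 0 < snd p \<Longrightarrow> elem_step\<^sup>*\<^sup>* t (unramify t)"
proof (induction t)
  case (add p t)
  then have "elem_step\<^sup>*\<^sup>* ({#(fst p, snd p)#} + t) (replicate_mset (snd p) (fst p, 1) + unramify t)"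
    by (intro elem_steps_add elem_steps_replicate) auto
  then show ?case by simp
qed simp

lemma elem_steps_merge_replicate:
  "elem_step\<^sup>*\<^sup>* (replicate_mset m (a, 1) + replicate_mset m (b, 1)) (replicate_mset m (a + b, 1))"
proof (induction m)
  case (Suc m)
  have "elem_step {#(a, 1), (b, 1)#} {#(a + b, 1)#}"
    unfolding elem_step_def elem_merge_def by (metis add_0)
  then have "elem_step\<^sup>*\<^sup>* ({#(a, 1), (b, 1)#} + (replicate_mset m (a, 1) + replicate_mset m (b, 1)))
      ({#(a + b, 1)#} + replicate_mset m (a + b, 1))"
    using Suc by (intro elem_steps_add) auto
  then show ?case by (simp add: add_mset_commute)
qed simp

lemma elem_step_unramify:
  assumes "elem_step t l"
  shows "elem_step\<^sup>*\<^sup>* (unramify t) (unramify l)"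
  using assms[unfolded elem_step_def]
proof (elim disjE)
  assume "elem_merge t l"
  then obtain A d1 d2 m where "t = A + {#(d1, m), (d2, m)#}" "l = A + {#(d1 + d2, m)#}"
    unfolding elem_merge_def by blast
  moreover have "elem_step\<^sup>*\<^sup>* (unramify A + (replicate_mset m (d1, 1) + replicate_mset m (d2, 1)))
      (unramify A + replicate_mset m (d1 + d2, 1))"
    by (intro elem_steps_add elem_steps_merge_replicate) auto
  ultimately show ?thesis by (simp add: add_ac)
next
  assume "elem_forget t l"
  then obtain A d1 m1 a where "a < m1"
    and t_eq: "t = A + {#(d1, m1)#}" and l_eq: "l = A + {#(d1, m1 - a), (d1, a)#}"
    unfolding elem_forget_def by blast
  then have "unramify l = unramify t"
    unfolding t_eq l_eq by (simp add: multiset_eq_iff)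
  then show ?thesis by simp
qed

lemma elem_steps_unramify_mono: "elem_step\<^sup>*\<^sup>* t l \<Longrightarrow> elem_step\<^sup>*\<^sup>* (unramify t) (unramify l)"
  by (induction rule: rtranclp_induct) (auto dest: elem_step_unramify)

lemma type_le_unramify:
  assumes "t \<in> types d"
  shows "type_le d t (unramify t)"
proof -
  have "\<forall>p\<in>#t. 0 < snd p" using assms by (simp add: types_def is_type_def)
  with assms show ?thesis by (simp add: type_le_def unramify_types elem_steps_unramify)
qed

lemma unramified_type_interval_unramify:
  assumes "t \<in> types d"
  shows "{k \<in> type_interval d t l. unramified k} = {k \<in> type_interval d (unramify t) l. unramified k}"
proof -
  have "type_le d (unramify t) k" if "type_le d t k" "unramified k" for k
    using that elem_steps_unramify_mono unramify_unramified[OF \<open>unramified k\<close>] unramify_types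
    by (fastforce simp: type_le_def)
  with type_le_trans[OF type_le_unramify[OF assms]] show ?thesis
    by (auto simp: type_interval_def)
qed

section \<open>Ramified types\<close>

lemma sum_restrict_unramified:
  assumes "finite S" "\<And>k. k \<in> S \<Longrightarrow> ramified k \<Longrightarrow> f k = 0"
  shows "(\<Sum>k\<in>S. f k) = (\<Sum>k\<in>{k\<in>S. unramified k}. f k)"
  using assms by (intro sum.mono_neutral_right) (auto simp: ramified_def)

lemma mobius_rec_ramified_top:
  "t \<in> types d \<Longrightarrow> ramified t \<Longrightarrow> mobius_rec d t (top_type d) = 0"
proof (induction "multiplicity_weight t" arbitrary: t rule: less_induct)
  case less
  let ?T = "top_type d" and ?u = "unramify t"
  have vanish: "mobius_rec d k ?T = 0" if "type_le d t k" "k \<noteq> t" "ramified k" for k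
    using that by (intro less.hyps) (auto simp: type_le_def intro: type_le_weight_less)
  have t_le_u: "type_le d t ?u"
    using less.prems(1) by (rule type_le_unramify)
  have u_ne_t: "?u \<noteq> t"
    using less.prems(2) unramified_unramify[of t] by (auto simp: ramified_def)
  have t_ne_T: "t \<noteq> ?T"
    using less.prems by (auto simp: ramified_def unramified_def top_type_def)
  have "mobius_rec d t ?T = - (\<Sum>k\<in>type_interval d t ?T - {t}. mobius_rec d k ?T)"
    using t_ne_T by (rule mobius_rec_recurrence)
  also have "\<dots> = - (\<Sum>k\<in>{k \<in> type_interval d t ?T - {t}. unramified k}. mobius_rec d k ?T)"
    using vanish finite_type_interval
    by (subst sum_restrict_unramified) (auto simp: type_interval_def)
  also have "{k \<in> type_interval d t ?T - {t}. unramified k} = {k \<in> type_interval d ?u ?T. unramified k}"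
    using less.prems unramified_type_interval_unramify by (auto simp: ramified_def)
  also have "(\<Sum>k\<in>{k \<in> type_interval d ?u ?T. unramified k}. mobius_rec d k ?T) =
      (\<Sum>k\<in>type_interval d ?u ?T. mobius_rec d k ?T)"
    using vanish t_le_u u_ne_t finite_type_interval
    by (subst sum_restrict_unramified)
      (auto simp: type_interval_def intro: type_le_trans dest: type_le_antisym)
  also have "\<dots> = 0"
    using unramify_ne_top[OF less.prems] by (rule sum_mobius_rec_eq_0)
  finally show ?case by simp
qed

theorem proposition4:
  fixes d :: nat and \<tau> :: "(nat \<times> nat) multiset"
  assumes "\<tau> \<in> types d" and "ramified \<tau>"
  shows "mobius_T d \<tau> (top_type d) = 0"
  using mobius_rec_ramified_top[OF assms] by (simp add: mobius_T_eq_mobius_rec)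

end
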